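(* Let $G$ be a non-complete double-critical $k$-chromatic graph. For every edge $xy\in E(G)$, every $(k-2)$-colouring of $G-x-y$ with colour set $[k-2]=\{1,\dots,k-2\}$, and every non-empty sequence $j_1,j_2,\dots,j_i$ of $i$ pairwise distinct colours from $[k-2]$, there is a path of order $i+2$ starting at $x$ and ending at $y$ whose $t$-th vertex after $x$ has colour $j_t$ for all $t\in[i]$. In particular, $xy$ is contained in at least $(k-2)!/(k-2-i)!$ cycles of length $i+2$.
   Context: All graphs are finite and simple. A graph $G$ is (vertex-)critical if $\chi(G-v)<\chi(G)$ for every vertex $v\in V(G)$. A critical graph $G$ is double-critical if $\chi(G-x-y)\le\chi(G)-2$ for every edge $xy\in E(G)$. The order of a path is its number of vertices; the length of a cycle is its number of edges. *)

theory Defs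
  imports Main
begin

definition simple_graph :: "'a set \<Rightarrow> ('a \<Rightarrow> 'a \<Rightarrow> bool) \<Rightarrow> bool" where
  "simple_graph V E \<longleftrightarrow> finite V \<and> (\<forall>u v. E u v \<longrightarrow> E v u) \<and> (\<forall>v. \<not> E v v)
     \<and> (\<forall>u v. E u v \<longrightarrow> u \<in> V \<and> v \<in> V)"

definition proper_colouring :: "('a \<Rightarrow> 'a \<Rightarrow> bool) \<Rightarrow> 'a set \<Rightarrow> nat \<Rightarrow> ('a \<Rightarrow> nat) \<Rightarrow> bool" where
  "proper_colouring E S k c \<longleftrightarrow> (\<forall>v\<in>S. c v \<in> {1..k}) \<and>
     (\<forall>u\<in>S. \<forall>v\<in>S. E u v \<longrightarrow> c u \<noteq> c v)"

definition colourable :: "('a \<Rightarrow> 'a \<Rightarrow> bool) \<Rightarrow> 'a set \<Rightarrow> nat \<Rightarrow> bool" where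
  "colourable E S k \<longleftrightarrow> (\<exists>c. proper_colouring E S k c)"

definition chi :: "('a \<Rightarrow> 'a \<Rightarrow> bool) \<Rightarrow> 'a set \<Rightarrow> nat" where
  "chi E S = (LEAST k. colourable E S k)"

definition critical :: "'a set \<Rightarrow> ('a \<Rightarrow> 'a \<Rightarrow> bool) \<Rightarrow> bool" where
  "critical V E \<longleftrightarrow> (\<forall>v\<in>V. chi E (V - {v}) < chi E V)"

definition double_critical :: "'a set \<Rightarrow> ('a \<Rightarrow> 'a \<Rightarrow> bool) \<Rightarrow> bool" where
  "double_critical V E \<longleftrightarrow> critical V E \<and>
     (\<forall>x y. E x y \<longrightarrow> chi E (V - {x, y}) \<le> chi E V - 2)"

definition complete_graph :: "'a set \<Rightarrow> ('a \<Rightarrow> 'a \<Rightarrow> bool) \<Rightarrow> bool" where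
  "complete_graph V E \<longleftrightarrow> (\<forall>u\<in>V. \<forall>v\<in>V. u \<noteq> v \<longrightarrow> E u v)"

text \<open>A path, given as the list of its vertices (its order is the length of the list).\<close>
definition is_path :: "('a \<Rightarrow> 'a \<Rightarrow> bool) \<Rightarrow> 'a list \<Rightarrow> bool" where
  "is_path E p \<longleftrightarrow> p \<noteq> [] \<and> distinct p \<and> (\<forall>j. Suc j < length p \<longrightarrow> E (p ! j) (p ! Suc j))"

text \<open>A cycle of length L, regarded as a subgraph, i.e. as its set of edges
  (each edge a two-element vertex set).\<close>
definition cycle_edges :: "'a list \<Rightarrow> 'a set set" where
  "cycle_edges vs = {{vs ! j, vs ! ((Suc j) mod length vs)} | j. j < length vs}"

definition is_cycle :: "('a \<Rightarrow> 'a \<Rightarrow> bool) \<Rightarrow> nat \<Rightarrow> 'a set set \<Rightarrow> bool" where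
  "is_cycle E L C \<longleftrightarrow> (\<exists>vs. length vs = L \<and> L \<ge> 3 \<and> distinct vs \<and>
     (\<forall>j<L. E (vs ! j) (vs ! ((Suc j) mod L))) \<and> C = cycle_edges vs)"

end

theory Submission
  imports Defs
begin

text \<open>For the colour sequence \<open>js = [j\<^sub>1, \<dots>, j\<^sub>i]\<close> let \<open>layer 0 = {x}\<close> and let \<open>layer t\<close>
  consist of the vertices of \<open>G - x - y\<close> of colour \<open>j\<^sub>t\<close> with a neighbour in \<open>layer (t - 1)\<close>.
  If \<open>y\<close> has a neighbour in \<open>layer i\<close>, walking back through the layers gives the required
  path; its inner vertices are distinct because their colours are. Otherwise shift the colours
  one layer down: \<open>layer t\<close> gets \<open>j\<^sub>t\<^sub>+\<^sub>1\<close> for \<open>t < i\<close>, while \<open>layer i\<close> and \<open>y\<close> get a new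
  colour. A vertex outside the layers of colour \<open>j\<^sub>t\<^sub>+\<^sub>1\<close> has no neighbour in \<open>layer t\<close>, so
  this is a proper \<open>(k - 1)\<close>-colouring of \<open>G\<close>, which is impossible. Closing the paths with the
  edge \<open>xy\<close> gives cycles of length \<open>i + 2\<close>, and distinct colour sequences give distinct cycles.\<close>

lemma chi_le_if_colourable: "colourable E S k \<Longrightarrow> chi E S \<le> k"
  unfolding chi_def by (rule Least_le)

lemma colourable_card:
  assumes "finite S" and "\<And>v. \<not> E v v"
  shows "colourable E S (card S)"
proof -
  obtain h where h: "bij_betw h S {0..<card S}"
    using ex_bij_betw_finite_nat[OF assms(1)] by blast
  have "proper_colouring E S (card S) (\<lambda>v. Suc (h v))"
    unfolding proper_colouring_def
  proof (intro conjI ballI impI)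
    fix v assume "v \<in> S"
    then show "Suc (h v) \<in> {1..card S}" using h bij_betwE by fastforce
  next
    fix u v assume "u \<in> S" "v \<in> S" "E u v"
    moreover have "u \<noteq> v" using assms(2) \<open>E u v\<close> by metis
    ultimately show "Suc (h u) \<noteq> Suc (h v)" using h by (auto simp: bij_betw_def inj_on_def)
  qed
  then show ?thesis unfolding colourable_def by blast
qed

lemma colourable_mono: "colourable E S a \<Longrightarrow> a \<le> b \<Longrightarrow> colourable E S b"
  unfolding colourable_def proper_colouring_def by fastforce

lemma proper_colouring_if_chi_le:
  assumes "finite S" and "\<And>v. \<not> E v v" and "chi E S \<le> b"
  obtains c where "proper_colouring E S b c"
proof -
  have "colourable E S (chi E S)"
    unfolding chi_def using colourable_card[OF assms(1,2)] by (rule LeastI)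
  then show ?thesis using colourable_mono assms(3) that unfolding colourable_def by blast
qed

lemma is_path_iff_successively:
  "is_path E p \<longleftrightarrow> p \<noteq> [] \<and> distinct p \<and> successively E p"
  unfolding is_path_def successively_conv_nth by blast

definition colour_sequence_path ::
    "('a \<Rightarrow> 'a \<Rightarrow> bool) \<Rightarrow> ('a \<Rightarrow> nat) \<Rightarrow> 'a \<Rightarrow> 'a \<Rightarrow> nat list \<Rightarrow> 'a list \<Rightarrow> bool" where
  "colour_sequence_path E c x y js p \<longleftrightarrow> is_path E p \<and> length p = length js + 2 \<and>
     hd p = x \<and> last p = y \<and> (\<forall>t<length js. c (p ! Suc t) = js ! t)"

locale colour_sequence =
  fixes V :: "'a set" and E :: "'a \<Rightarrow> 'a \<Rightarrow> bool" and x y :: 'a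
    and m :: nat and c :: "'a \<Rightarrow> nat" and js :: "nat list"
  assumes graph: "simple_graph V E" and edge: "E x y"
    and colouring: "proper_colouring E (V - {x, y}) m c"
    and distinct_js: "distinct js" and js_colours: "set js \<subseteq> {1..m}"
begin

lemma edge_sym: "E u v \<Longrightarrow> E v u"
  and edge_irrefl: "\<not> E v v"
  and edge_in_V: "E u v \<Longrightarrow> u \<in> V \<and> v \<in> V"
  using graph unfolding simple_graph_def by blast+

lemma x_neq_y: "x \<noteq> y"
  using edge edge_irrefl by metis

lemma colour_range: "v \<in> V - {x, y} \<Longrightarrow> c v \<in> {1..m}"
  and colour_proper: "u \<in> V - {x, y} \<Longrightarrow> v \<in> V - {x, y} \<Longrightarrow> E u v \<Longrightarrow> c u \<noteq> c v"
  using colouring unfolding proper_colouring_def by blast+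

fun layer :: "nat \<Rightarrow> 'a set" where
  "layer 0 = {x}"
| "layer (Suc t) = {v \<in> V - {x, y}. c v = js ! t \<and> (\<exists>u\<in>layer t. E u v)}"

lemma layer_walk:
  assumes "t \<le> length js" and "v \<in> layer t"
  shows "\<exists>ms. length ms = t \<and> successively E (x # ms) \<and> last (x # ms) = v \<and>
           set ms \<subseteq> V - {x, y} \<and> map c ms = take t js"
  using assms
proof (induction t arbitrary: v)
  case 0
  then show ?case by simp
next
  case (Suc t)
  then obtain u where u: "u \<in> layer t" "E u v" "v \<in> V - {x, y}" "c v = js ! t" by auto
  with Suc obtain ms where ms: "length ms = t" "successively E (x # ms)" "last (x # ms) = u"
      "set ms \<subseteq> V - {x, y}" "map c ms = take t js" by (metis Suc_leD)
  have "successively E ((x # ms) @ [v])"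
    using ms(2,3) u(2) by (subst successively_append_iff) simp
  moreover have "take (Suc t) js = take t js @ [js ! t]"
    using Suc.prems(1) by (simp add: take_Suc_conv_app_nth)
  ultimately show ?case
    using ms u by (intro exI[of _ "ms @ [v]"]) (simp add: subset_iff)
qed

lemma path_if_last_layer_neighbour:
  assumes "v \<in> layer (length js)" and "E v y"
  shows "\<exists>p. colour_sequence_path E c x y js p"
proof -
  obtain ms where ms: "length ms = length js" "successively E (x # ms)" "last (x # ms) = v"
      "set ms \<subseteq> V - {x, y}" "map c ms = js"
    using layer_walk[OF order.refl assms(1)] by auto
  let ?p = "x # ms @ [y]"
  have "distinct ms"
    using ms(5) distinct_js by (metis distinct_map)
  then have "distinct ?p"
    using ms(4) x_neq_y by auto
  moreover have "successively E ?p"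
    using ms(2,3) assms(2) successively_append_iff[of E "x # ms" "[y]"] by simp
  moreover have "c (?p ! Suc t) = js ! t" if "t < length js" for t
  proof -
    have "?p ! Suc t = ms ! t"
      using that ms(1) by (simp add: nth_append)
    then show ?thesis
      using that ms(1,5) by (metis nth_map)
  qed
  ultimately show ?thesis
    unfolding colour_sequence_path_def is_path_iff_successively
    using ms(1) by (intro exI[of _ ?p]) auto
qed

lemma layer_Suc_D: "v \<in> layer (Suc t) \<Longrightarrow> v \<in> V - {x, y} \<and> c v = js ! t"
  by auto

lemma y_notin_layer: "y \<notin> layer t"
  using x_neq_y by (cases t) auto

lemma layer_unique:
  assumes "s \<le> length js" "t \<le> length js" "v \<in> layer s" "v \<in> layer t"
  shows "s = t"
proof -
  have x_only_in_layer_0: "r = 0" if "x \<in> layer r" for r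
    using that by (cases r) auto
  show ?thesis
  proof (cases s)
    case 0
    then show ?thesis
      using assms(3,4) x_only_in_layer_0 by (metis layer.simps(1) singletonD)
  next
    case (Suc s')
    have "t \<noteq> 0"
    proof
      assume "t = 0"
      then have "x \<in> layer s"
        using assms(3,4) by simp
      then show False
        using Suc x_only_in_layer_0 by blast
    qed
    then obtain t' where t': "t = Suc t'"
      using not0_implies_Suc by blast
    then have "js ! s' = js ! t'"
      using Suc assms(3,4) layer_Suc_D by metis
    moreover have "s' < length js" "t' < length js"
      using Suc t' assms(1,2) by auto
    ultimately show ?thesis
      using Suc t' distinct_js by (simp add: nth_eq_iff_index_eq)
  qed
qed

definition layered :: "'a \<Rightarrow> bool" where
  "layered v \<longleftrightarrow> (\<exists>t\<le>length js. v \<in> layer t)"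

definition recolour :: "'a \<Rightarrow> nat" where
  "recolour v = (if v = y then Suc m
     else if layered v then (js @ [Suc m]) ! (THE t. t \<le> length js \<and> v \<in> layer t)
     else c v)"

lemma recolour_y: "recolour y = Suc m"
  by (simp add: recolour_def)

lemma recolour_layer: "t \<le> length js \<Longrightarrow> v \<in> layer t \<Longrightarrow> recolour v = (js @ [Suc m]) ! t"
proof -
  assume t: "t \<le> length js" "v \<in> layer t"
  then have "(THE t. t \<le> length js \<and> v \<in> layer t) = t"
    using layer_unique by blast
  then show ?thesis
    using t y_notin_layer unfolding recolour_def layered_def by auto
qed

lemma recolour_unlayered:
  assumes "v \<in> V" "v \<noteq> y" "\<not> layered v"
  shows "v \<in> V - {x, y} \<and> recolour v = c v"
proof -
  have "v \<noteq> x"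
    using assms(3) unfolding layered_def by force
  then show ?thesis
    using assms unfolding recolour_def by simp
qed

lemma new_colours: "distinct (js @ [Suc m])" "set (js @ [Suc m]) \<subseteq> {1..Suc m}"
  using distinct_js js_colours by auto

lemma recolour_layer_neq:
  assumes no_neighbour: "\<forall>w\<in>layer (length js). \<not> E w y"
    and u: "s \<le> length js" "u \<in> layer s" and uv: "E u v"
  shows "recolour u \<noteq> recolour v"
proof -
  have new_nth: "(js @ [Suc m]) ! t = js ! t" "js ! t \<in> {1..m}" if "t < length js" for t
    using that js_colours nth_mem by (auto simp: nth_append subset_iff)
  have ru: "recolour u = (js @ [Suc m]) ! s"
    using recolour_layer u by blast
  consider "v = y" | t where "t \<le> length js" "v \<in> layer t" | "v \<noteq> y" "\<not> layered v"
    unfolding layered_def by blast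
  then show ?thesis
  proof cases
    case 1
    then have "s < length js"
      using no_neighbour u uv le_neq_implies_less by blast
    then show ?thesis
      using ru new_nth[of s] 1 recolour_y by simp
  next
    case (2 t)
    have "s \<noteq> t"
    proof
      assume "s = t"
      then show False
        using u uv 2 edge_irrefl colour_proper by (cases s) (auto, metis)
    qed
    then show ?thesis
      using ru recolour_layer[OF 2] u 2 new_colours(1) by (simp add: nth_eq_iff_index_eq)
  next
    case 3
    then have v: "v \<in> V - {x, y}" "recolour v = c v"
      using recolour_unlayered edge_in_V uv by blast+
    show ?thesis
    proof (cases "s < length js")
      case True
      have "v \<notin> layer (Suc s)"
        using 3 True unfolding layered_def by (meson Suc_leI)
      then have "c v \<noteq> js ! s"
        using u(2) uv v(1) by auto
      then show ?thesis
        using ru v(2) new_nth True by simp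
    next
      case False
      then show ?thesis
        using ru v colour_range[OF v(1)] u(1) by (auto simp: nth_append)
    qed
  qed
qed

lemma recolour_proper:
  assumes no_neighbour: "\<forall>w\<in>layer (length js). \<not> E w y"
  shows "proper_colouring E V (Suc m) recolour"
  unfolding proper_colouring_def
proof (intro conjI ballI impI)
  fix v assume "v \<in> V"
  consider "v = y" | t where "t \<le> length js" "v \<in> layer t" | "v \<noteq> y" "\<not> layered v"
    unfolding layered_def by blast
  then show "recolour v \<in> {1..Suc m}"
  proof cases
    case 1
    then show ?thesis by (simp add: recolour_y)
  next
    case (2 t)
    then show ?thesis
      using recolour_layer new_colours(2) nth_mem by (fastforce simp: nth_append)
  next
    case 3
    then have v: "v \<in> V - {x, y}" "recolour v = c v"
      using recolour_unlayered \<open>v \<in> V\<close> by blast+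
    then show ?thesis
      using colour_range[OF v(1)] by simp
  qed
next
  have unlayered_neq_y: "recolour v \<noteq> recolour y" if "v \<in> V" "v \<noteq> y" "\<not> layered v" for v
    using recolour_unlayered[OF that] colour_range recolour_y by fastforce
  fix u v assume "u \<in> V" "v \<in> V" "E u v"
  then have "u \<noteq> v"
    using edge_irrefl by blast
  consider "layered u" | "layered v" | "u = y" | "v = y"
    | "\<not> layered u" "\<not> layered v" "u \<noteq> y" "v \<noteq> y"
    by blast
  then show "recolour u \<noteq> recolour v"
  proof cases
    case 1
    then show ?thesis
      using recolour_layer_neq[OF no_neighbour] \<open>E u v\<close> unfolding layered_def by blast
  next
    case 2
    then show ?thesis
      using recolour_layer_neq[OF no_neighbour] edge_sym[OF \<open>E u v\<close>] unfolding layered_def by metis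
  next
    case 3
    then show ?thesis
      using \<open>u \<noteq> v\<close> \<open>v \<in> V\<close> unlayered_neq_y recolour_layer_neq[OF no_neighbour]
        edge_sym[OF \<open>E u v\<close>]
      unfolding layered_def by metis
  next
    case 4
    then show ?thesis
      using \<open>u \<noteq> v\<close> \<open>u \<in> V\<close> unlayered_neq_y recolour_layer_neq[OF no_neighbour] \<open>E u v\<close>
      unfolding layered_def by metis
  next
    case 5
    then show ?thesis
      using recolour_unlayered \<open>u \<in> V\<close> \<open>v \<in> V\<close> colour_proper \<open>E u v\<close> by metis
  qed
qed

lemma colour_sequence_path_or_colourable:
  "(\<exists>p. colour_sequence_path E c x y js p) \<or> colourable E V (Suc m)"
  using path_if_last_layer_neighbour recolour_proper unfolding colourable_def by blast

end

lemma colour_sequence_path_exists: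
  assumes "simple_graph V E" and "chi E V = k" and "E x y"
    and "proper_colouring E (V - {x, y}) (k - 2) c"
    and "js \<noteq> []" and "distinct js" and "set js \<subseteq> {1..k - 2}"
  shows "\<exists>p. colour_sequence_path E c x y js p"
proof -
  interpret colour_sequence V E x y "k - 2" c js
    using assms by unfold_locales
  have "3 \<le> k"
    using assms(5,7) by (cases js) auto
  then have "\<not> colourable E V (Suc (k - 2))"
    using chi_le_if_colourable assms(2) by fastforce
  then show ?thesis
    using colour_sequence_path_or_colourable by blast
qed

lemma colours_of_colour_sequence_path:
  "colour_sequence_path E c x y js p \<Longrightarrow> js = map (\<lambda>t. c (p ! Suc t)) [0..<length js]"
  unfolding colour_sequence_path_def by (auto intro: nth_equalityI)

lemma cycle_of_path:
  assumes "is_path E p" and "3 \<le> length p" and "E (last p) (hd p)"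
  shows "is_cycle E (length p) (cycle_edges p)"
  unfolding is_cycle_def
proof (intro exI[of _ p] conjI allI impI)
  show "distinct p"
    using assms(1) unfolding is_path_def by simp
  fix j assume j: "j < length p"
  show "E (p ! j) (p ! (Suc j mod length p))"
  proof (cases "Suc j < length p")
    case True
    then show ?thesis
      using assms(1) unfolding is_path_def by simp
  next
    case False
    then have "j = length p - 1" "p \<noteq> []"
      using j by auto
    then have "p ! j = last p" "p ! (Suc j mod length p) = hd p"
      by (auto simp: last_conv_nth hd_conv_nth)
    then show ?thesis
      using assms(3) by simp
  qed
qed (use assms(2) in auto)

lemma closing_edge_in_cycle_edges: "p \<noteq> [] \<Longrightarrow> {hd p, last p} \<in> cycle_edges p"
  unfolding cycle_edges_def
  by (intro CollectI exI[of _ "length p - 1"]) (auto simp: hd_conv_nth last_conv_nth)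

lemma cycle_edges_next_vertex:
  assumes "distinct p" "distinct q" "length p = length q" "3 \<le> length p"
    and "last p = last q" "cycle_edges p = cycle_edges q"
    and "Suc (Suc m) < length p" and agree: "\<forall>j\<le>m. p ! j = q ! j"
  shows "p ! Suc m = q ! Suc m"
proof -
  let ?L = "length p"
  have p_inj: "i = j" if "i < ?L" "j < ?L" "p ! i = p ! j" for i j
    using that assms(1) nth_eq_iff_index_eq by blast
  have q_inj: "i = j" if "i < ?L" "j < ?L" "q ! i = q ! j" for i j
    using that assms(2,3) nth_eq_iff_index_eq by metis
  have "{p ! m, p ! Suc m} \<in> cycle_edges p"
    unfolding cycle_edges_def using assms(7) by (intro CollectI exI[of _ m]) auto
  then have "{p ! m, p ! Suc m} \<in> cycle_edges q"
    using assms(6) by simp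
  then obtain a where a: "a < ?L" "{p ! m, p ! Suc m} = {q ! a, q ! (Suc a mod ?L)}"
    using assms(3) unfolding cycle_edges_def by auto
  have "p ! m \<noteq> p ! Suc m"
    using p_inj[of m "Suc m"] assms(7) by auto
  then consider "p ! m = q ! a" "p ! Suc m = q ! (Suc a mod ?L)"
    | "p ! m = q ! (Suc a mod ?L)" "p ! Suc m = q ! a"
    using a(2) by (auto simp: doubleton_eq_iff)
  then show ?thesis
  proof cases
    case 1
    then have "a = m"
      using q_inj agree a(1) assms(7) by (metis Suc_lessD order.refl)
    then show ?thesis
      using 1 assms(7) by simp
  next
    case 2
    have "Suc a mod ?L < ?L" "m < ?L"
      using assms(7) by (auto intro: mod_less_divisor)
    then have wraps: "Suc a mod ?L = m"
      using 2 q_inj agree by simp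
    show ?thesis
    proof (cases m)
      case 0
      then have "a = ?L - 1"
        using wraps a(1) by (cases "Suc a = ?L") auto
      moreover have "p \<noteq> []" "q \<noteq> []"
        using assms(3,4) by auto
      ultimately have same: "p ! Suc m = p ! (?L - 1)"
        using 2 assms(3,5) by (metis last_conv_nth)
      have "Suc m = ?L - 1"
        using p_inj[OF _ _ same] assms(7) by simp
      with assms(7) show ?thesis
        by simp
    next
      case (Suc m')
      then have "a = m'"
        using wraps a(1) by (cases "Suc a = ?L") auto
      then have same: "p ! Suc m = p ! m'"
        using 2 agree Suc by simp
      have "Suc m = m'"
        using p_inj[OF _ _ same] assms(7) Suc by simp
      with Suc show ?thesis
        by simp
    qed
  qed
qed

lemma cycle_edges_inj:
  assumes "distinct p" "distinct q" "length p = length q" "3 \<le> length p"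
    and "hd p = hd q" "last p = last q" "cycle_edges p = cycle_edges q"
  shows "p = q"
proof -
  have "\<forall>j\<le>m. p ! j = q ! j" if "m < length p" for m
    using that
  proof (induction m)
    case 0
    have "p \<noteq> []" "q \<noteq> []"
      using assms(3,4) by auto
    then show ?case
      using assms(5) by (simp add: hd_conv_nth)
  next
    case (Suc m)
    have "p ! Suc m = q ! Suc m"
    proof (cases "Suc (Suc m) < length p")
      case True
      then show ?thesis
        using cycle_edges_next_vertex[OF assms(1-4,6,7)] Suc by simp
    next
      case False
      then have "Suc m = length p - 1" "p \<noteq> []" "q \<noteq> []"
        using Suc.prems assms(3) by auto
      then show ?thesis
        using assms(3,6) by (metis last_conv_nth)
    qed
    then show ?case
      using Suc by (auto simp: le_Suc_eq)
  qed
  then show ?thesis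
    using assms(3) by (intro nth_equalityI) auto
qed

lemma finite_cycles:
  assumes "simple_graph V E"
  shows "finite {C. is_cycle E L C}"
proof (rule finite_subset)
  show "{C. is_cycle E L C} \<subseteq> Pow (Pow V)"
    using assms unfolding is_cycle_def cycle_edges_def simple_graph_def by fastforce
  show "finite (Pow (Pow V))"
    using assms unfolding simple_graph_def by simp
qed

lemma card_cycles_through_edge_ge:
  assumes graph: "simple_graph V E" and edge: "E x y" and "1 \<le> i"
    and paths: "\<forall>js\<in>D. length js = i \<and> (\<exists>p. colour_sequence_path E c x y js p)"
  shows "card D \<le> card {C. is_cycle E (i + 2) C \<and> {x, y} \<in> C}"
proof -
  obtain P where P: "\<forall>js\<in>D. colour_sequence_path E c x y js (P js)"
    using paths by metis
  have P_path: "is_path E (P js)" "length (P js) = i + 2" "hd (P js) = x" "last (P js) = y"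
    if "js \<in> D" for js
    using P paths that unfolding colour_sequence_path_def by auto
  have "E y x"
    using graph edge unfolding simple_graph_def by blast
  have into_cycles: "(cycle_edges \<circ> P) ` D \<subseteq> {C. is_cycle E (i + 2) C \<and> {x, y} \<in> C}"
  proof clarify
    fix js assume "js \<in> D"
    note p = P_path[OF this]
    have "is_cycle E (i + 2) (cycle_edges (P js))"
      using cycle_of_path[OF p(1)] p(2-4) \<open>E y x\<close> \<open>1 \<le> i\<close> by simp
    moreover have "{x, y} \<in> cycle_edges (P js)"
      using closing_edge_in_cycle_edges[of "P js"] p by fastforce
    ultimately show "is_cycle E (i + 2) ((cycle_edges \<circ> P) js) \<and> {x, y} \<in> (cycle_edges \<circ> P) js"
      by simp
  qed
  have inj: "inj_on (cycle_edges \<circ> P) D"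
  proof (rule inj_onI)
    fix a b assume ab: "a \<in> D" "b \<in> D" "(cycle_edges \<circ> P) a = (cycle_edges \<circ> P) b"
    have "distinct (P a)" "distinct (P b)"
      using P_path ab(1,2) unfolding is_path_def by blast+
    then have "P a = P b"
      using P_path[OF ab(1)] P_path[OF ab(2)] ab(3) \<open>1 \<le> i\<close>
      by (intro cycle_edges_inj) simp_all
    have "length a = i" "length b = i"
      using paths ab(1,2) by auto
    have "a = map (\<lambda>t. c (P a ! Suc t)) [0..<length a]"
      using P ab(1) by (intro colours_of_colour_sequence_path) blast
    also have "\<dots> = map (\<lambda>t. c (P b ! Suc t)) [0..<length b]"
      using \<open>P a = P b\<close> \<open>length a = i\<close> \<open>length b = i\<close> by simp
    also have "\<dots> = b"
      using P ab(2) by (intro colours_of_colour_sequence_path[symmetric]) blast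
    finally show "a = b" .
  qed
  have "finite {C. is_cycle E (i + 2) C \<and> {x, y} \<in> C}"
    by (rule finite_subset[OF _ finite_cycles[OF graph]]) blast
  then show ?thesis
    using card_inj_on_le[OF inj into_cycles] by blast
qed

lemma card_cycles_through_edge_ge_fact:
  assumes "simple_graph V E" and "chi E V = k" and "E x y"
    and c: "proper_colouring E (V - {x, y}) (k - 2) c" and "1 \<le> i" and "i \<le> k - 2"
  shows "fact (k - 2) div fact (k - 2 - i) \<le> card {C. is_cycle E (i + 2) C \<and> {x, y} \<in> C}"
proof -
  let ?D = "{js. length js = i \<and> distinct js \<and> set js \<subseteq> {1..k - 2}}"
  have "card ?D = fact (k - 2) div fact (k - 2 - i)"
    using card_lists_distinct_length_eq[of "{1..k - 2}" i] assms(6) by (simp add: fact_div_fact)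
  moreover have "\<forall>js\<in>?D. length js = i \<and> (\<exists>p. colour_sequence_path E c x y js p)"
  proof
    fix js assume js: "js \<in> ?D"
    then have "js \<noteq> []"
      using assms(5) by auto
    with js show "length js = i \<and> (\<exists>p. colour_sequence_path E c x y js p)"
      using colour_sequence_path_exists[OF assms(1-3) c] by simp
  qed
  then have "card ?D \<le> card {C. is_cycle E (i + 2) C \<and> {x, y} \<in> C}"
    by (rule card_cycles_through_edge_ge[OF assms(1,3,5)])
  ultimately show ?thesis
    by simp
qed

theorem proposition4:
  fixes V :: "'a set" and E :: "'a \<Rightarrow> 'a \<Rightarrow> bool" and k :: nat
  assumes "simple_graph V E"
    and "\<not> complete_graph V E"
    and "double_critical V E"
    and "chi E V = k"
  shows "\<forall>x y. E x y \<longrightarrow>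
      (\<forall>c js. proper_colouring E (V - {x, y}) (k - 2) c \<and> js \<noteq> [] \<and> distinct js
              \<and> set js \<subseteq> {1..k - 2} \<longrightarrow>
         (\<exists>p. is_path E p \<and> length p = length js + 2 \<and> hd p = x \<and> last p = y \<and>
              (\<forall>t<length js. c (p ! Suc t) = js ! t)))
    \<and> (\<forall>i. 1 \<le> i \<and> i \<le> k - 2 \<longrightarrow>
         card {C. is_cycle E (i + 2) C \<and> {x, y} \<in> C} \<ge> fact (k - 2) div fact (k - 2 - i))"
proof -
  have paths: "\<exists>p. colour_sequence_path E c x y js p"
    if "E x y" "proper_colouring E (V - {x, y}) (k - 2) c"
      "js \<noteq> []" "distinct js" "set js \<subseteq> {1..k - 2}" for x y c js
    using colour_sequence_path_exists[OF assms(1,4)] that by blast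
  have cycles: "fact (k - 2) div fact (k - 2 - i) \<le> card {C. is_cycle E (i + 2) C \<and> {x, y} \<in> C}"
    if "E x y" "1 \<le> i" "i \<le> k - 2" for x y i
  proof -
    have "finite (V - {x, y})" and "\<And>v. \<not> E v v"
      using assms(1) unfolding simple_graph_def by auto
    moreover have "chi E (V - {x, y}) \<le> k - 2"
      using assms(3,4) \<open>E x y\<close> unfolding double_critical_def by blast
    ultimately obtain c where "proper_colouring E (V - {x, y}) (k - 2) c"
      by (rule proper_colouring_if_chi_le)
    then show ?thesis
      using card_cycles_through_edge_ge_fact[OF assms(1,4) that(1)] that(2,3) by blast
  qed
  show ?thesis
    using paths cycles unfolding colour_sequence_path_def by blast
qed

end
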